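(* Let $C\subset\mathbb{R}^n$ be a pointed, $n$-dimensional closed convex cone and let $K$ be a $C$-pseudo-cone. Then the Gaussian surface area measure $S_{\gamma^{n}}(K,\cdot)$ is a finite measure on $\Omega=S^{n-1}\cap\operatorname{int}C^{\circ}$.
   Context: $C^{\circ}=\{x:\langle x,y\rangle\le 0\ \forall y\in C\}$. A pseudo-cone is a nonempty closed convex set $K$ with $o\notin K$ and $\lambda K\subseteq K$ for $\lambda\ge1$; it is a $C$-pseudo-cone if its recession cone $\{z:K+z\subseteq K\}$ equals $C$. For Borel $\eta\subset\Omega$, $S_{\gamma^n}(K,\eta)=(2\pi)^{-n/2}\int_{\nu_K^{-1}(\eta)}e^{-|x|^2/2}d\mathcal{H}^{n-1}(x)$, where $\nu_K^{-1}(\eta)$ is the set of boundary points of $K$ with an outer unit normal in $\eta$. *)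

theory Defs
  imports "HOL-Analysis.Analysis"
begin

definition polar_cone :: "'a::euclidean_space set \<Rightarrow> 'a set" where
  "polar_cone C = {x. \<forall>y\<in>C. inner x y \<le> 0}"

definition recession_cone :: "'a::euclidean_space set \<Rightarrow> 'a set" where
  "recession_cone K = {z. \<forall>x\<in>K. x + z \<in> K}"

definition pointed_cone :: "'a::euclidean_space set \<Rightarrow> bool" where
  "pointed_cone C \<longleftrightarrow> C \<inter> uminus ` C = {0}"

definition pseudo_cone :: "'a::euclidean_space set \<Rightarrow> bool" where
  "pseudo_cone K \<longleftrightarrow> K \<noteq> {} \<and> closed K \<and> convex K \<and> 0 \<notin> K \<and>
     (\<forall>t::real. t \<ge> 1 \<longrightarrow> (\<forall>x\<in>K. t *\<^sub>R x \<in> K))"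

definition C_pseudo_cone :: "'a::euclidean_space set \<Rightarrow> 'a set \<Rightarrow> bool" where
  "C_pseudo_cone C K \<longleftrightarrow> pseudo_cone K \<and> recession_cone K = C"

definition outer_unit_normal :: "'a::euclidean_space set \<Rightarrow> 'a \<Rightarrow> 'a \<Rightarrow> bool" where
  "outer_unit_normal K x u \<longleftrightarrow> norm u = 1 \<and> (\<forall>y\<in>K. inner (y - x) u \<le> 0)"

definition rev_spherical_image :: "'a::euclidean_space set \<Rightarrow> 'a set \<Rightarrow> 'a set" where
  "rev_spherical_image K \<eta> = {x \<in> frontier K. \<exists>u\<in>\<eta>. outer_unit_normal K x u}"

definition hausdorff_omega :: "nat \<Rightarrow> real" where
  "hausdorff_omega s = pi powr (real s / 2) / Gamma (real s / 2 + 1)"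

definition hausdorff_outer :: "nat \<Rightarrow> 'a::euclidean_space set \<Rightarrow> ennreal" where
  "hausdorff_outer s A =
     (SUP \<delta>\<in>{0<..}. INF U\<in>{U :: nat \<Rightarrow> 'a set. A \<subseteq> (\<Union>i. U i) \<and> (\<forall>i. diameter (U i) \<le> \<delta>)}.
        (\<Sum>i. ennreal (if U i = {} then 0 else hausdorff_omega s * (diameter (U i) / 2) ^ s)))"

definition hausdorff_measure :: "nat \<Rightarrow> 'a::euclidean_space measure" where
  "hausdorff_measure s = measure_of UNIV
     {A. \<forall>T. hausdorff_outer s T = hausdorff_outer s (T \<inter> A) + hausdorff_outer s (T - A)}
     (hausdorff_outer s)"

definition gauss_surface_area :: "'a::euclidean_space set \<Rightarrow> 'a set \<Rightarrow> ennreal" where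
  "gauss_surface_area K \<eta> =
     ennreal ((2 * pi) powr (- real DIM('a) / 2)) *
     (\<integral>\<^sup>+ x. indicator (rev_spherical_image K \<eta>) x * ennreal (exp (- (norm x)\<^sup>2 / 2))
        \<partial>hausdorff_measure (DIM('a) - 1))"

end

theory Submission
  imports Defs "HOL-Real_Asymp.Real_Asymp"
begin

(* Every boundary point x of K with an outer unit normal u and |x| <= R is the nearest-point
   projection of the point where the ray x + t u leaves the cube [-R, R]^n. The projection is
   1-Lipschitz, and the boundary of the cube is covered by 2n k^(n-1) cells of diameter
   2R sqrt(n-1)/k; hence this part of the boundary of K has (n-1)-dimensional Hausdorff outer
   measure O(R^(n-1)). Against such polynomial growth the Gaussian weight exp(-|x|^2/2), summed
   over the shells j <= |x| < j + 1, is finite. *)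

section \<open>Finite covers and the Hausdorff outer measure\<close>

definition finite_cover :: "'a::metric_space set set \<Rightarrow> real \<Rightarrow> 'a set \<Rightarrow> bool" where
  "finite_cover F d X \<longleftrightarrow> finite F \<and> X \<subseteq> \<Union>F \<and> (\<forall>S\<in>F. \<forall>y\<in>S. \<forall>z\<in>S. dist y z \<le> d)"

lemma finite_cover_subset: "finite_cover F d Y \<Longrightarrow> X \<subseteq> Y \<Longrightarrow> finite_cover F d X"
  unfolding finite_cover_def by blast

lemma finite_cover_image:
  assumes "finite_cover F d X" and contraction: "\<And>y z. dist (f y) (f z) \<le> dist y z"
  shows "finite_cover ((`) f ` F) d (f ` X)"
proof -
  have F: "finite F" "X \<subseteq> \<Union>F" and small: "\<forall>S\<in>F. \<forall>y\<in>S. \<forall>z\<in>S. dist y z \<le> d"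
    using assms(1) by (auto simp: finite_cover_def)
  have image_small: "dist y' z' \<le> d" if S': "S' \<in> (`) f ` F" "y' \<in> S'" "z' \<in> S'" for S' y' z'
  proof -
    obtain S y z where "S \<in> F" "y \<in> S" "z \<in> S" "y' = f y" "z' = f z"
      using S' by blast
    then have "dist y z \<le> d" "dist y' z' \<le> dist y z"
      using small contraction[of y z] by simp_all
    then show ?thesis by linarith
  qed
  show ?thesis
    unfolding finite_cover_def
  proof (intro conjI ballI)
    show "finite ((`) f ` F)" using F(1) by simp
    show "f ` X \<subseteq> \<Union> ((`) f ` F)" using F(2) by blast
  qed (rule image_small)
qed

lemma hausdorff_omega_nonneg: "0 \<le> hausdorff_omega s"
  unfolding hausdorff_omega_def by (intro divide_nonneg_pos Gamma_real_pos) auto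

lemma hausdorff_outer_le_covers:
  fixes X :: "'a::euclidean_space set"
  assumes "\<And>\<delta>::real. \<delta> > 0 \<Longrightarrow> \<exists>U. X \<subseteq> (\<Union>i. U i) \<and> (\<forall>i. diameter (U i) \<le> \<delta>) \<and>
     (\<Sum>i. ennreal (if U i = {} then 0 else hausdorff_omega s * (diameter (U i) / 2) ^ s)) \<le> B"
  shows "hausdorff_outer s X \<le> B"
  unfolding hausdorff_outer_def
proof (rule SUP_least)
  fix \<delta> :: real assume "\<delta> \<in> {0<..}"
  then obtain U where U: "X \<subseteq> (\<Union>i. U i)" "\<forall>i. diameter (U i) \<le> \<delta>"
     "(\<Sum>i. ennreal (if U i = {} then 0 else hausdorff_omega s * (diameter (U i) / 2) ^ s)) \<le> B"
    using assms by force
  show "(INF U\<in>{U :: nat \<Rightarrow> 'a set. X \<subseteq> (\<Union>i. U i) \<and> (\<forall>i. diameter (U i) \<le> \<delta>)}.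
        (\<Sum>i. ennreal (if U i = {} then 0 else hausdorff_omega s * (diameter (U i) / 2) ^ s))) \<le> B"
    by (rule INF_lower2[of U]) (use U in auto)
qed

lemma hausdorff_outer_mono:
  assumes "X \<subseteq> Y"
  shows "hausdorff_outer s X \<le> hausdorff_outer s Y"
  unfolding hausdorff_outer_def by (intro SUP_mono' INF_mono) (use assms in blast)

lemma space_hausdorff_measure: "space (hausdorff_measure s) = UNIV"
  by (simp add: hausdorff_measure_def space_measure_of_conv)

lemma emeasure_hausdorff_measure_le: "emeasure (hausdorff_measure s) A \<le> hausdorff_outer s A"
  unfolding hausdorff_measure_def emeasure_measure_of_conv by auto

lemma finite_cover_imp_sequence_cover:
  fixes X :: "'a::euclidean_space set"
  assumes "finite_cover F d X" "0 \<le> d"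
  shows "\<exists>U. X \<subseteq> (\<Union>i. U i) \<and> (\<forall>i. diameter (U i) \<le> d) \<and>
     (\<Sum>i. ennreal (if U i = {} then 0 else hausdorff_omega s * (diameter (U i) / 2) ^ s))
       \<le> ennreal (real (card F) * (hausdorff_omega s * (d / 2) ^ s))"
proof -
  have F: "finite F" "X \<subseteq> \<Union>F" and small: "\<forall>S\<in>F. \<forall>y\<in>S. \<forall>z\<in>S. dist y z \<le> d"
    using assms(1) by (auto simp: finite_cover_def)
  obtain e where e: "bij_betw e {0..<card F} F"
    using ex_bij_betw_nat_finite[OF F(1)] by blast
  define U where "U i = (if i < card F then e i else {})" for i
  have U_small: "dist y z \<le> d" if "y \<in> U i" "z \<in> U i" for i y z
    using that small bij_betw_apply[OF e] by (auto simp: U_def split: if_splits)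
  have diam: "diameter (U i) \<le> d" for i
    by (rule diameter_le) (use U_small \<open>0 \<le> d\<close> in \<open>auto simp: dist_norm\<close>)
  have term_le: "ennreal (if U i = {} then 0 else hausdorff_omega s * (diameter (U i) / 2) ^ s)
      \<le> ennreal (hausdorff_omega s * (d / 2) ^ s)" for i
  proof (cases "U i = {}")
    case False
    then obtain y where "y \<in> U i" by auto
    then have "bounded (U i)"
      unfolding bounded_def using U_small by blast
    then have "0 \<le> diameter (U i)" by (rule diameter_ge_0)
    then show ?thesis using False diam[of i] hausdorff_omega_nonneg[of s]
      by (auto intro!: ennreal_leI mult_left_mono power_mono)
  qed simp
  have cover: "X \<subseteq> (\<Union>i. U i)"
  proof
    fix x assume "x \<in> X"
    then obtain S where "S \<in> F" "x \<in> S" using F(2) by blast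
    then obtain i where "i < card F" "e i = S"
      using bij_betw_imp_surj_on[OF e] by (metis atLeastLessThan_iff imageE)
    then show "x \<in> (\<Union>i. U i)" using \<open>x \<in> S\<close> by (auto simp: U_def)
  qed
  have "(\<Sum>i. ennreal (if U i = {} then 0 else hausdorff_omega s * (diameter (U i) / 2) ^ s))
      = (\<Sum>i<card F. ennreal (if U i = {} then 0 else hausdorff_omega s * (diameter (U i) / 2) ^ s))"
    by (rule suminf_finite) (auto simp: U_def)
  also have "\<dots> \<le> (\<Sum>i<card F. ennreal (hausdorff_omega s * (d / 2) ^ s))"
    by (rule sum_mono) (rule term_le)
  also have "\<dots> = ennreal (real (card F) * (hausdorff_omega s * (d / 2) ^ s))"
    by (simp add: ennreal_of_nat_eq_real_of_nat ennreal_mult')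
  finally show ?thesis
    using cover diam by (intro exI[of _ U]) simp
qed

lemma hausdorff_outer_le_finite_covers:
  fixes X :: "'a::euclidean_space set"
  assumes "0 \<le> D"
    and covers: "\<And>k. 1 \<le> k \<Longrightarrow> \<exists>F. finite_cover F (D / real k) X \<and> card F \<le> N * k ^ s"
  shows "hausdorff_outer s X \<le> ennreal (real N * hausdorff_omega s * (D / 2) ^ s)"
proof (rule hausdorff_outer_le_covers)
  fix \<delta> :: real assume "\<delta> > 0"
  define k where "k = nat \<lceil>D / \<delta>\<rceil> + 1"
  have k: "1 \<le> k" by (simp add: k_def)
  have "D / \<delta> \<le> real k" unfolding k_def by linarith
  then have "D / real k \<le> \<delta>"
    using \<open>\<delta> > 0\<close> k by (simp add: field_simps)
  obtain F where F: "finite_cover F (D / real k) X" "card F \<le> N * k ^ s"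
    using covers[OF k] by blast
  have "0 \<le> D / real k" using \<open>0 \<le> D\<close> by simp
  then obtain U where U: "X \<subseteq> (\<Union>i. U i)" "\<forall>i. diameter (U i) \<le> D / real k"
    and sum_le: "(\<Sum>i. ennreal (if U i = {} then 0 else hausdorff_omega s * (diameter (U i) / 2) ^ s))
       \<le> ennreal (real (card F) * (hausdorff_omega s * (D / real k / 2) ^ s))"
    using finite_cover_imp_sequence_cover[OF F(1)] by blast
  have "\<forall>i. diameter (U i) \<le> \<delta>"
    using U(2) \<open>D / real k \<le> \<delta>\<close> by (meson order_trans)
  note sum_le
  also have "ennreal (real (card F) * (hausdorff_omega s * (D / real k / 2) ^ s))
      \<le> ennreal (real (N * k ^ s) * (hausdorff_omega s * (D / real k / 2) ^ s))"
    using F(2) hausdorff_omega_nonneg[of s] \<open>0 \<le> D\<close>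
    by (intro ennreal_leI mult_right_mono) (simp_all only: of_nat_le_iff, auto)
  also have "real (N * k ^ s) * (hausdorff_omega s * (D / real k / 2) ^ s)
      = real N * hausdorff_omega s * (D / 2) ^ s"
    using k by (simp add: power_divide field_simps)
  finally show "\<exists>U. X \<subseteq> (\<Union>i. U i) \<and> (\<forall>i. diameter (U i) \<le> \<delta>) \<and>
     (\<Sum>i. ennreal (if U i = {} then 0 else hausdorff_omega s * (diameter (U i) / 2) ^ s))
       \<le> ennreal (real N * hausdorff_omega s * (D / 2) ^ s)"
    using U(1) \<open>\<forall>i. diameter (U i) \<le> \<delta>\<close> by (intro exI[of _ U]) simp
qed

section \<open>Projecting the boundary of a cube onto a convex set\<close>

lemma norm_le_sqrt_DIM_minus_one:
  fixes v :: "'a::euclidean_space"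
  assumes "b \<in> Basis" "v \<bullet> b = 0" and bound: "\<And>c. c \<in> Basis \<Longrightarrow> \<bar>v \<bullet> c\<bar> \<le> h"
  shows "norm v \<le> sqrt (real (DIM('a) - 1)) * h"
proof -
  have "0 \<le> h" using bound[OF \<open>b \<in> Basis\<close>] by linarith
  have "(norm v)\<^sup>2 = (\<Sum>c\<in>Basis. (v \<bullet> c)\<^sup>2)"
    unfolding power2_norm_eq_inner euclidean_inner[of v v] by (simp add: power2_eq_square)
  also have "\<dots> = (\<Sum>c\<in>Basis - {b}. (v \<bullet> c)\<^sup>2)"
    using assms(1,2) by (simp add: sum.remove)
  also have "\<dots> \<le> real (card (Basis - {b})) * h\<^sup>2"
  proof (rule sum_bounded_above)
    fix c assume "c \<in> Basis - {b}"
    then have "\<bar>v \<bullet> c\<bar> \<le> \<bar>h\<bar>" using bound by force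
    then show "(v \<bullet> c)\<^sup>2 \<le> h\<^sup>2" by (simp only: abs_le_square_iff)
  qed
  also have "\<dots> = (sqrt (real (DIM('a) - 1)) * h)\<^sup>2"
    using assms(1) by (simp add: power_mult_distrib)
  finally show ?thesis
    using \<open>0 \<le> h\<close> by (meson power2_le_imp_le mult_nonneg_nonneg real_sqrt_ge_zero of_nat_0_le_iff)
qed

lemma ex_grid_interval:
  fixes a h y :: real
  assumes "0 < h" "1 \<le> k" "a \<le> y" "y \<le> a + real k * h"
  shows "\<exists>j<k. a + real j * h \<le> y \<and> y \<le> a + real (Suc j) * h"
proof -
  define z where "z = (y - a) / h"
  have z: "0 \<le> z" "z \<le> real k"
    using assms by (simp_all add: z_def field_simps)
  define j where "j = min (nat \<lfloor>z\<rfloor>) (k - 1)"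
  have "j < k" using assms(2) by (simp add: j_def)
  moreover have "real j \<le> z" "z \<le> real (Suc j)"
    using z assms(2) by (auto simp: j_def min_def split: if_splits) linarith+
  moreover have "real j * h \<le> y - a" "y - a \<le> real (Suc j) * h"
    using calculation(2,3) assms(1) by (simp_all add: z_def pos_le_divide_eq pos_divide_le_eq)
  ultimately show ?thesis by (intro exI[of _ j]) auto
qed

(* The J-th cell of the grid of k^(n-1) congruent subcubes on the face y \<bullet> b = +-R of [-R, R]^n. *)
definition cube_face_cell :: "real \<Rightarrow> nat \<Rightarrow> 'a::euclidean_space \<Rightarrow> bool \<Rightarrow> ('a \<Rightarrow> nat) \<Rightarrow> 'a set" where
  "cube_face_cell R k b \<sigma> J = {y. y \<bullet> b = (if \<sigma> then R else - R) \<and>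
     (\<forall>c\<in>Basis - {b}. - R + real (J c) * (2 * R / real k) \<le> y \<bullet> c \<and>
                      y \<bullet> c \<le> - R + real (Suc (J c)) * (2 * R / real k))}"

lemma frontier_cube_mem_cube_face_cell:
  assumes "0 < R" "1 \<le> k" "y \<in> frontier (cbox (- R *\<^sub>R One) (R *\<^sub>R One :: 'a::euclidean_space))"
  shows "\<exists>b\<in>Basis. \<exists>\<sigma>. \<exists>J\<in>Basis - {b} \<rightarrow>\<^sub>E {..<k}. y \<in> cube_face_cell R k b \<sigma> J"
proof -
  define h where "h = 2 * R / real k"
  from assms(3) obtain b where b: "b \<in> Basis" "y \<bullet> b = R \<or> y \<bullet> b = - R"
    and in_cube: "\<forall>c\<in>Basis. - R \<le> y \<bullet> c \<and> y \<bullet> c \<le> R"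
    by (fastforce simp: frontier_cbox mem_box)
  have "\<forall>c\<in>Basis - {b}. \<exists>j<k. - R + real j * h \<le> y \<bullet> c \<and> y \<bullet> c \<le> - R + real (Suc j) * h"
    using in_cube assms(1,2) by (intro ballI ex_grid_interval) (auto simp: h_def)
  then obtain J where J: "\<forall>c\<in>Basis - {b}. J c < k \<and>
      - R + real (J c) * h \<le> y \<bullet> c \<and> y \<bullet> c \<le> - R + real (Suc (J c)) * h"
    by metis
  have "restrict J (Basis - {b}) \<in> Basis - {b} \<rightarrow>\<^sub>E {..<k}"
    using J by auto
  moreover have "y \<in> cube_face_cell R k b (y \<bullet> b = R) (restrict J (Basis - {b}))"
    using b J assms(1) by (auto simp: cube_face_cell_def h_def)
  ultimately show ?thesis using b(1) by blast
qed

lemma dist_le_in_cube_face_cell: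
  fixes y z :: "'a::euclidean_space"
  assumes "0 \<le> R" "b \<in> Basis" "y \<in> cube_face_cell R k b \<sigma> J" "z \<in> cube_face_cell R k b \<sigma> J"
  shows "dist y z \<le> 2 * R * sqrt (real (DIM('a) - 1)) / real k"
proof -
  define h where "h = 2 * R / real k"
  have "norm (y - z) \<le> sqrt (real (DIM('a) - 1)) * h"
  proof (rule norm_le_sqrt_DIM_minus_one[OF assms(2)])
    show "(y - z) \<bullet> b = 0"
      using assms(3,4) by (simp add: cube_face_cell_def inner_diff_left)
    show "\<bar>(y - z) \<bullet> c\<bar> \<le> h" if "c \<in> Basis" for c
    proof (cases "c = b")
      case True
      then show ?thesis using \<open>(y - z) \<bullet> b = 0\<close> assms(1) by (simp add: h_def)
    next
      case False
      then have "- R + real (J c) * h \<le> y \<bullet> c \<and> y \<bullet> c \<le> - R + real (Suc (J c)) * h"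
        "- R + real (J c) * h \<le> z \<bullet> c \<and> z \<bullet> c \<le> - R + real (Suc (J c)) * h"
        using that assms(3,4) by (auto simp: cube_face_cell_def h_def)
      then show ?thesis by (simp add: algebra_simps abs_le_iff)
    qed
  qed
  then show ?thesis by (simp add: dist_norm h_def ac_simps)
qed

lemma frontier_cube_finite_covers:
  assumes "0 < R" "1 \<le> k"
  shows "\<exists>F. finite_cover F (2 * R * sqrt (real (DIM('a) - 1)) / real k)
      (frontier (cbox (- R *\<^sub>R One) (R *\<^sub>R One :: 'a::euclidean_space))) \<and>
    card F \<le> 2 * DIM('a) * k ^ (DIM('a) - 1)"
proof -
  define I where "I = (SIGMA b:(Basis :: 'a set). (UNIV :: bool set) \<times> (Basis - {b} \<rightarrow>\<^sub>E {..<k}))"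
  define F where "F = (\<lambda>(b, \<sigma>, J). cube_face_cell R k b \<sigma> J) ` I"
  have "finite I"
    unfolding I_def by (intro finite_SigmaI finite_cartesian_product finite_PiE) auto
  have "card I = (\<Sum>b\<in>(Basis :: 'a set). 2 * k ^ (DIM('a) - 1))"
    unfolding I_def
    by (subst card_SigmaI) (auto simp: card_cartesian_product card_PiE card_Diff_singleton
        intro!: sum.cong finite_cartesian_product finite_PiE)
  then have "card F \<le> 2 * DIM('a) * k ^ (DIM('a) - 1)"
    using card_image_le[OF \<open>finite I\<close>, of "\<lambda>(b, \<sigma>, J). cube_face_cell R k b \<sigma> J"]
    by (simp add: F_def)
  moreover have "frontier (cbox (- R *\<^sub>R One) (R *\<^sub>R One :: 'a)) \<subseteq> \<Union>F"
  proof
    fix y assume "y \<in> frontier (cbox (- R *\<^sub>R One) (R *\<^sub>R One :: 'a))"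
    then obtain b \<sigma> J where "b \<in> Basis" "J \<in> Basis - {b} \<rightarrow>\<^sub>E {..<k}"
      and y: "y \<in> cube_face_cell R k b \<sigma> J"
      using frontier_cube_mem_cube_face_cell[OF assms] by blast
    then have "cube_face_cell R k b \<sigma> J \<in> F"
      unfolding F_def I_def by (intro image_eqI[where x="(b, \<sigma>, J)"]) auto
    then show "y \<in> \<Union>F" using y by blast
  qed
  moreover have "dist y z \<le> 2 * R * sqrt (real (DIM('a) - 1)) / real k"
    if "S \<in> F" "y \<in> S" "z \<in> S" for S y z
  proof -
    obtain b \<sigma> J where "b \<in> Basis" "S = cube_face_cell R k b \<sigma> J"
      using \<open>S \<in> F\<close> by (auto simp: F_def I_def)
    then show ?thesis
      using dist_le_in_cube_face_cell[of R b y k \<sigma> J z] assms(1) that(2,3) by simp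
  qed
  moreover have "finite F" using \<open>finite I\<close> by (simp add: F_def)
  ultimately show ?thesis
    unfolding finite_cover_def by blast
qed

lemma closest_point_add_outer_normal:
  fixes K :: "'a::euclidean_space set"
  assumes "closed K" "convex K" "x \<in> K" "\<And>y. y \<in> K \<Longrightarrow> (y - x) \<bullet> u \<le> 0" "0 \<le> t"
  shows "closest_point K (x + t *\<^sub>R u) = x"
proof (rule closest_point_unique[OF assms(2,1,3), symmetric], intro ballI)
  fix y assume "y \<in> K"
  have "0 \<le> t * ((x - y) \<bullet> u)"
    using assms(4)[OF \<open>y \<in> K\<close>] assms(5) by (simp add: inner_diff_left)
  moreover have "(norm ((x - y) + t *\<^sub>R u))\<^sup>2
      = (norm (x - y))\<^sup>2 + 2 * (t * ((x - y) \<bullet> u)) + (norm (t *\<^sub>R u))\<^sup>2"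
    unfolding power2_norm_eq_inner
    by (simp add: inner_add_left inner_add_right inner_commute[of u "x - y"] distrib_left)
  ultimately have "(norm (t *\<^sub>R u))\<^sup>2 \<le> (norm ((x - y) + t *\<^sub>R u))\<^sup>2"
    by simp
  then have "norm (t *\<^sub>R u) \<le> norm ((x - y) + t *\<^sub>R u)"
    by (rule power2_le_imp_le) simp
  then show "dist (x + t *\<^sub>R u) x \<le> dist (x + t *\<^sub>R u) y"
    by (simp add: dist_norm algebra_simps)
qed

lemma ray_meets_frontier:
  fixes x u :: "'a::euclidean_space"
  assumes "bounded Q" "x \<in> Q" "u \<noteq> 0"
  shows "\<exists>t\<ge>0. x + t *\<^sub>R u \<in> frontier Q"
proof -
  obtain B where B: "\<And>y. y \<in> Q \<Longrightarrow> norm y \<le> B"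
    using assms(1) by (auto simp: bounded_iff)
  define L where "L = (B + norm x + 1) / norm u"
  have "0 \<le> B" using B[OF assms(2)] norm_ge_zero[of x] by linarith
  then have "0 \<le> L" by (simp add: L_def)
  have "norm (L *\<^sub>R u) = B + norm x + 1"
    using \<open>0 \<le> B\<close> assms(3) by (simp add: L_def)
  moreover have "norm (L *\<^sub>R u) - norm x \<le> norm (x + L *\<^sub>R u)"
    using norm_triangle_ineq2[of "L *\<^sub>R u" "- x"] by (simp add: add.commute)
  ultimately have "B < norm (x + L *\<^sub>R u)" by linarith
  then have "x + L *\<^sub>R u \<notin> Q" using B by force
  then obtain y where "y \<in> closed_segment x (x + L *\<^sub>R u)" "y \<in> frontier Q"
    using connected_Int_frontier[OF connected_segment, of x "x + L *\<^sub>R u" Q] assms(2) by auto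
  then obtain \<theta> where "0 \<le> \<theta>" "y = x + (\<theta> * L) *\<^sub>R u"
    by (auto simp: closed_segment_def algebra_simps)
  then show ?thesis
    using \<open>y \<in> frontier Q\<close> \<open>0 \<le> L\<close> by (intro exI[of _ "\<theta> * L"]) auto
qed

lemma outer_normal_point_in_closest_point_image:
  fixes K :: "'a::euclidean_space set"
  assumes "closed K" "convex K" "x \<in> K" "outer_unit_normal K x u" "bounded Q" "x \<in> Q"
  shows "x \<in> closest_point K ` frontier Q"
proof -
  have "u \<noteq> 0" using assms(4) by (auto simp: outer_unit_normal_def)
  then obtain t where "0 \<le> t" "x + t *\<^sub>R u \<in> frontier Q"
    using ray_meets_frontier[OF assms(5,6)] by blast
  moreover have "closest_point K (x + t *\<^sub>R u) = x"
    using assms(4) \<open>0 \<le> t\<close>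
    by (intro closest_point_add_outer_normal[OF assms(1-3)]) (auto simp: outer_unit_normal_def)
  ultimately show ?thesis by (metis image_eqI)
qed

lemma outer_normal_points_subset_closest_point_image:
  fixes K :: "'a::euclidean_space set"
  assumes "closed K" "convex K"
  shows "{x \<in> K. (\<exists>u. outer_unit_normal K x u) \<and> norm x \<le> R}
    \<subseteq> closest_point K ` frontier (cbox (- R *\<^sub>R One) (R *\<^sub>R One))"
proof safe
  fix x u assume "x \<in> K" "outer_unit_normal K x u" "norm x \<le> R"
  have "\<forall>i\<in>Basis. \<bar>x \<bullet> i\<bar> \<le> R"
    using \<open>norm x \<le> R\<close> Basis_le_norm order_trans by blast
  then have "x \<in> cbox (- R *\<^sub>R One) (R *\<^sub>R One)"
    by (auto simp: mem_box abs_le_iff)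
  then show "x \<in> closest_point K ` frontier (cbox (- R *\<^sub>R One) (R *\<^sub>R One))"
    by (intro outer_normal_point_in_closest_point_image[OF assms \<open>x \<in> K\<close> \<open>outer_unit_normal K x u\<close>])
      simp_all
qed

lemma hausdorff_outer_outer_normal_points_le:
  fixes K :: "'a::euclidean_space set"
  assumes "closed K" "convex K" "K \<noteq> {}" "0 < R"
  shows "hausdorff_outer (DIM('a) - 1) {x \<in> K. (\<exists>u. outer_unit_normal K x u) \<and> norm x \<le> R}
    \<le> ennreal (2 * real DIM('a) * hausdorff_omega (DIM('a) - 1) * (R * sqrt (real (DIM('a) - 1))) ^ (DIM('a) - 1))"
proof -
  have "hausdorff_outer (DIM('a) - 1) {x \<in> K. (\<exists>u. outer_unit_normal K x u) \<and> norm x \<le> R}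
    \<le> ennreal (real (2 * DIM('a)) * hausdorff_omega (DIM('a) - 1) *
         (2 * R * sqrt (real (DIM('a) - 1)) / 2) ^ (DIM('a) - 1))"
  proof (rule hausdorff_outer_le_finite_covers)
    show "0 \<le> 2 * R * sqrt (real (DIM('a) - 1))" using assms(4) by simp
    fix k :: nat assume "1 \<le> k"
    then obtain F where F: "finite_cover F (2 * R * sqrt (real (DIM('a) - 1)) / real k)
        (frontier (cbox (- R *\<^sub>R One) (R *\<^sub>R One :: 'a)))"
      and card_F: "card F \<le> 2 * DIM('a) * k ^ (DIM('a) - 1)"
      using frontier_cube_finite_covers[where 'a='a, OF assms(4)] by blast
    have "finite_cover ((`) (closest_point K) ` F) (2 * R * sqrt (real (DIM('a) - 1)) / real k)
        (closest_point K ` frontier (cbox (- R *\<^sub>R One) (R *\<^sub>R One)))"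
      using F closest_point_lipschitz[OF assms(2,1,3)] by (rule finite_cover_image)
    then have "finite_cover ((`) (closest_point K) ` F) (2 * R * sqrt (real (DIM('a) - 1)) / real k)
        {x \<in> K. (\<exists>u. outer_unit_normal K x u) \<and> norm x \<le> R}"
      using outer_normal_points_subset_closest_point_image[OF assms(1,2), of R]
      by (rule finite_cover_subset)
    moreover have "card ((`) (closest_point K) ` F) \<le> 2 * DIM('a) * k ^ (DIM('a) - 1)"
      using card_image_le[of F "(`) (closest_point K)"] F card_F by (simp add: finite_cover_def)
    ultimately show "\<exists>F'. finite_cover F' (2 * R * sqrt (real (DIM('a) - 1)) / real k)
        {x \<in> K. (\<exists>u. outer_unit_normal K x u) \<and> norm x \<le> R} \<and>
      card F' \<le> 2 * DIM('a) * k ^ (DIM('a) - 1)"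
      by blast
  qed
  also have "real (2 * DIM('a)) * hausdorff_omega (DIM('a) - 1) * (2 * R * sqrt (real (DIM('a) - 1)) / 2) ^ (DIM('a) - 1)
      = 2 * real DIM('a) * hausdorff_omega (DIM('a) - 1) * (R * sqrt (real (DIM('a) - 1))) ^ (DIM('a) - 1)"
    by simp
  finally show ?thesis .
qed

section \<open>Gaussian integrals over sets of polynomial growth\<close>

lemma summable_gaussian_times_power:
  "summable (\<lambda>j::nat. exp (- (real j)\<^sup>2 / 2) * (real j + 1) ^ s)"
proof (rule summable_comparison_test_bigo)
  show "summable (\<lambda>j. norm (exp (- 1 :: real) ^ j))"
    by (simp add: summable_geometric)
  show "(\<lambda>j::nat. exp (- (real j)\<^sup>2 / 2) * (real j + 1) ^ s) \<in> O(\<lambda>j. exp (- 1) ^ j)"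
    by real_asymp
qed

lemma ennreal_le_suminf_level_sets:
  fixes t :: "nat \<Rightarrow> real" and v :: ennreal
  assumes "t \<longlonglongrightarrow> 0" "v \<le> ennreal (t 0)"
  shows "v \<le> (\<Sum>j. ennreal (t j) * of_bool (ennreal (t (Suc j)) < v))"
proof (cases "v = 0")
  case False
  obtain r where r: "v = ennreal r" "0 < r"
    using False assms(2) by (cases v) (auto simp: top_unique)
  then obtain m where "t m < r"
    using eventually_happens[OF order_tendstoD(2)[OF assms(1) \<open>0 < r\<close>]] by auto
  then have ex: "\<exists>m. ennreal (t m) < v"
    using r by (auto intro: ennreal_lessI)
  define m where "m = (LEAST m. ennreal (t m) < v)"
  have m: "ennreal (t m) < v"
    unfolding m_def by (rule LeastI_ex[OF ex])
  then obtain j where j: "m = Suc j"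
    using assms(2) by (cases m) auto
  have "\<not> ennreal (t j) < v"
    using not_less_Least[of j "\<lambda>m. ennreal (t m) < v"] j by (simp add: m_def)
  then have "v \<le> ennreal (t j) * of_bool (ennreal (t (Suc j)) < v)"
    using m j by simp
  also have "\<dots> \<le> (\<Sum>j. ennreal (t j) * of_bool (ennreal (t (Suc j)) < v))" (is "?F j \<le> suminf ?F")
    using ennreal_suminf_lessD[of ?F "?F j" j] not_le by blast
  finally show ?thesis .
qed simp

(* A need not be M-measurable; only the level sets of simple functions below the integrand are measured. *)
lemma simple_integral_le_gaussian_series:
  fixes M :: "'a::real_normed_vector measure" and A :: "'a set"
  assumes space: "space M = UNIV"
    and growth: "\<And>E r. E \<in> sets M \<Longrightarrow> E \<subseteq> A \<inter> cball 0 r \<Longrightarrow> 1 \<le> r \<Longrightarrow>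
      emeasure M E \<le> ennreal (c * r ^ s)"
    and g: "simple_function M g" "\<And>x. g x \<le> indicator A x * ennreal (exp (- (norm x)\<^sup>2 / 2))"
  shows "integral\<^sup>S M g \<le> (\<Sum>j. ennreal (exp (- (real j)\<^sup>2 / 2) * (c * (real j + 1) ^ s)))"
proof -
  define t where "t j = exp (- (real j)\<^sup>2 / 2)" for j :: nat
  define E where "E j = {x. ennreal (t (Suc j)) < g x}" for j
  have E_sets: "E j \<in> sets M" for j
  proof -
    have "{x \<in> space M. ennreal (t (Suc j)) < g x} \<in> sets M"
      using borel_measurable_simple_function[OF g(1)] by measurable
    then show ?thesis by (simp add: E_def space)
  qed
  have E_sub: "E j \<subseteq> A \<inter> cball 0 (real j + 1)" for j
  proof
    fix x assume "x \<in> E j"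
    then have "ennreal (t (Suc j)) < indicator A x * ennreal (exp (- (norm x)\<^sup>2 / 2))"
      using g(2)[of x] by (auto simp: E_def intro: order_less_le_trans)
    then have "x \<in> A" "ennreal (t (Suc j)) < ennreal (exp (- (norm x)\<^sup>2 / 2))"
      by (cases "x \<in> A"; simp)+
    then have "x \<in> A" "(norm x)\<^sup>2 < (real j + 1)\<^sup>2"
      by (simp_all add: t_def ennreal_less_iff add.commute)
    then show "x \<in> A \<inter> cball 0 (real j + 1)"
      using power2_less_imp_less[of "norm x" "real j + 1"] by simp
  qed
  have g_le: "g x \<le> (\<Sum>j. ennreal (t j) * indicator (E j) x)" for x
  proof -
    have "t \<longlonglongrightarrow> 0" unfolding t_def by real_asymp
    moreover have "g x \<le> ennreal (t 0)"
      using g(2)[of x] by (auto simp: t_def indicator_def intro: order_trans)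
    ultimately have "g x \<le> (\<Sum>j. ennreal (t j) * of_bool (ennreal (t (Suc j)) < g x))"
      by (rule ennreal_le_suminf_level_sets)
    then show ?thesis by (simp add: E_def indicator_def)
  qed
  have "integral\<^sup>S M g = integral\<^sup>N M g"
    by (rule nn_integral_eq_simple_integral[OF g(1), symmetric])
  also have "\<dots> \<le> (\<integral>\<^sup>+ x. (\<Sum>j. ennreal (t j) * indicator (E j) x) \<partial>M)"
    by (intro nn_integral_mono g_le)
  also have "\<dots> = (\<Sum>j. ennreal (t j) * emeasure M (E j))"
    using E_sets by (simp add: nn_integral_suminf nn_integral_cmult_indicator)
  also have "\<dots> \<le> (\<Sum>j. ennreal (t j) * ennreal (c * (real j + 1) ^ s))"
    using growth[OF E_sets E_sub] by (intro suminf_le mult_left_mono) auto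
  also have "\<dots> = (\<Sum>j. ennreal (exp (- (real j)\<^sup>2 / 2) * (c * (real j + 1) ^ s)))"
    by (simp add: t_def ennreal_mult')
  finally show ?thesis .
qed

lemma nn_integral_indicator_gaussian_finite:
  fixes M :: "'a::real_normed_vector measure" and A :: "'a set"
  assumes "space M = UNIV" and "0 \<le> c"
    and "\<And>E r. E \<in> sets M \<Longrightarrow> E \<subseteq> A \<inter> cball 0 r \<Longrightarrow> 1 \<le> r \<Longrightarrow>
      emeasure M E \<le> ennreal (c * r ^ s)"
  shows "(\<integral>\<^sup>+ x. indicator A x * ennreal (exp (- (norm x)\<^sup>2 / 2)) \<partial>M) < \<infinity>"
proof -
  define a where "a j = exp (- (real j)\<^sup>2 / 2) * (c * (real j + 1) ^ s)" for j :: nat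
  have "summable a"
    unfolding a_def using summable_mult[OF summable_gaussian_times_power, of c]
    by (simp add: ac_simps)
  have "(\<integral>\<^sup>+ x. indicator A x * ennreal (exp (- (norm x)\<^sup>2 / 2)) \<partial>M) \<le> (\<Sum>j. ennreal (a j))"
    unfolding nn_integral_def a_def
    by (rule SUP_least) (use simple_integral_le_gaussian_series[OF assms(1,3)] in \<open>auto simp: le_fun_def\<close>)
  also have "\<dots> = ennreal (\<Sum>j. a j)"
    using \<open>0 \<le> c\<close> by (intro suminf_ennreal2[OF _ \<open>summable a\<close>]) (simp add: a_def)
  finally show ?thesis
    by (simp add: le_less_trans)
qed

lemma gauss_surface_area_finite:
  fixes K :: "'a::euclidean_space set"
  assumes "closed K" "convex K" "K \<noteq> {}"
  shows "gauss_surface_area K \<eta> < \<infinity>"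
proof -
  define s where "s = DIM('a) - 1"
  define c where "c = 2 * real DIM('a) * hausdorff_omega s * sqrt (real s) ^ s"
  have "(\<integral>\<^sup>+ x. indicator (rev_spherical_image K \<eta>) x * ennreal (exp (- (norm x)\<^sup>2 / 2))
      \<partial>hausdorff_measure s) < \<infinity>"
  proof (rule nn_integral_indicator_gaussian_finite)
    show "space (hausdorff_measure s) = UNIV" by (rule space_hausdorff_measure)
    show "0 \<le> c" using hausdorff_omega_nonneg[of s] by (simp add: c_def)
    fix E and r :: real
    assume "E \<subseteq> rev_spherical_image K \<eta> \<inter> cball 0 r" "1 \<le> r"
    then have E: "E \<subseteq> {x \<in> K. (\<exists>u. outer_unit_normal K x u) \<and> norm x \<le> r}"
      using frontier_subset_closed[OF assms(1)] by (auto simp: rev_spherical_image_def)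
    have "emeasure (hausdorff_measure s) E \<le> hausdorff_outer s E"
      by (rule emeasure_hausdorff_measure_le)
    also have "\<dots> \<le> hausdorff_outer s {x \<in> K. (\<exists>u. outer_unit_normal K x u) \<and> norm x \<le> r}"
      using E by (rule hausdorff_outer_mono)
    also have "\<dots> \<le> ennreal (2 * real DIM('a) * hausdorff_omega s * (r * sqrt (real s)) ^ s)"
      using hausdorff_outer_outer_normal_points_le[OF assms, of r] \<open>1 \<le> r\<close> by (simp add: s_def)
    also have "\<dots> = ennreal (c * r ^ s)"
      by (simp add: c_def power_mult_distrib ac_simps)
    finally show "emeasure (hausdorff_measure s) E \<le> ennreal (c * r ^ s)" .
  qed
  then show ?thesis
    unfolding gauss_surface_area_def s_def by (simp add: ennreal_mult_less_top)
qed

theorem lemma3p1: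
  fixes C K :: "'a::euclidean_space set"
  assumes "closed C" and "convex_cone C"
    and "pointed_cone C"
    and "interior C \<noteq> {}"
    and "C_pseudo_cone C K"
  shows "gauss_surface_area K (sphere 0 1 \<inter> interior (polar_cone C)) < \<infinity>"
proof -
  have "closed K" "convex K" "K \<noteq> {}"
    using assms(5) by (auto simp: C_pseudo_cone_def pseudo_cone_def)
  then show ?thesis by (rule gauss_surface_area_finite)
qed

end
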